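(* Let $G$ be a cycle, $H=(T,L)$ a demand digraph, fix a partition of the population and an assignment of cost functions, and let $\sigma$ and $\hat\sigma$ be two equilibria. Let $\ell\in L$ and $i\in I_\ell$ with $\delta(i)\neq 0$. Then exactly one of the following holds: (1) there is $J\subseteq L$ with $\ell\in J$, $A_J\neq\emptyset$, and $\delta(i)\Delta_J<0$; (2) for all $J\subseteq L$ with $\ell\in J$ and $A_J\neq\emptyset$, $\Delta_J=0$.
   Context: Model: supply graph $G=(V,E)$ (here a cycle) with directed version having arc set $A$; simple demand digraph $H=(T,L)$, $T\subseteq V$, whose arcs are OD-pairs; population $I$ a bounded interval with Lebesgue measure $\lambda$, partitioned into measurable $I_\ell$, $\ell\in L$; routes are directed paths in the directed version of $G$ between the endpoints of an OD-pair; strategy profiles are measurable maps assigning to each $i\in I_\ell$ an $\ell$-route; flow $f_a=\lambda\{i:a\in\sigma(i)\}$; each user $i$ has nonnegative continuous strictly increasing costs $c_a^i$ (measurable in $i$), route cost $\sum_{a\in r}c^i_a(f_a)$; an equilibrium is a strategy profile in which every user uses a minimal-cost route for his OD-pair. Fixing an orientation of the cycle, arcs are positive or negative, each $\ell\in L$ has a unique positive route $r_\ell^+$ and unique negative route $r_\ell^-$; for a user $i\in I_\ell$ write $r_i^\pm=r_\ell^\pm$. For $J\subseteq L$, $A_J^+$ is the set of positive arcs lying in $r_\ell^+$ for exactly the $\ell\in J$ (and in no $r_\ell^+$ with $\ell\notin J$), $A_J^-$ analogously for negative arcs, $A_J=A_J^+\cup A_J^-$. For a strategy profile $\sigma$ and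 $J\subseteq L$, $f_J^{+}=\lambda\{i\in\bigcup_{\ell\in J}I_\ell:\sigma(i)=r_i^+\}$, $f_J^-=\lambda\{i\in\bigcup_{\ell\in J}I_\ell:\sigma(i)=r_i^-\}$, and hatted quantities refer to $\hat\sigma$. Define $\Delta_J=f_J^+-\hat f_J^+=\hat f_J^--f_J^-$ and $\delta(i)=\mathbf 1[\sigma(i)=r_i^+]-\mathbf 1[\hat\sigma(i)=r_i^+]$. *)

theory Defs
  imports "HOL-Analysis.Analysis"
begin

text \<open>Supply graph: the cycle on vertices 0,...,n-1 (n >= 3) with edges {k, k+1 mod n}.\<close>

definition pos_arcs :: "nat \<Rightarrow> (nat \<times> nat) set" where
  "pos_arcs n = {(k, Suc k mod n) | k. k < n}"

definition neg_arcs :: "nat \<Rightarrow> (nat \<times> nat) set" where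
  "neg_arcs n = {(Suc k mod n, k) | k. k < n}"

text \<open>Edge {k,k+1} lies on the positive s-t path iff k is in the cyclic interval s,...,t-1.\<close>
definition pos_idx :: "nat \<Rightarrow> nat \<Rightarrow> nat \<Rightarrow> nat \<Rightarrow> bool" where
  "pos_idx n s t k \<longleftrightarrow> (k + n - s) mod n < (t + n - s) mod n"

definition rplus :: "nat \<Rightarrow> nat \<times> nat \<Rightarrow> (nat \<times> nat) set" where
  "rplus n l = {(k, Suc k mod n) | k. k < n \<and> pos_idx n (fst l) (snd l) k}"

definition rminus :: "nat \<Rightarrow> nat \<times> nat \<Rightarrow> (nat \<times> nat) set" where
  "rminus n l = {(Suc k mod n, k) | k. k < n \<and> \<not> pos_idx n (fst l) (snd l) k}"

definition routes :: "nat \<Rightarrow> nat \<times> nat \<Rightarrow> (nat \<times> nat) set set" where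
  "routes n l = {rplus n l, rminus n l}"

definition flow :: "real set \<Rightarrow> (real \<Rightarrow> (nat \<times> nat) set) \<Rightarrow> nat \<times> nat \<Rightarrow> real" where
  "flow I \<sigma> a = measure lebesgue {i \<in> I. a \<in> \<sigma> i}"

definition route_cost ::
  "(real \<Rightarrow> nat \<times> nat \<Rightarrow> real \<Rightarrow> real) \<Rightarrow> real set \<Rightarrow> (real \<Rightarrow> (nat \<times> nat) set)
    \<Rightarrow> real \<Rightarrow> (nat \<times> nat) set \<Rightarrow> real" where
  "route_cost c I \<sigma> i r = (\<Sum>a\<in>r. c i a (flow I \<sigma> a))"

definition strategy_profile ::
  "nat \<Rightarrow> (nat \<times> nat) set \<Rightarrow> real set \<Rightarrow> (nat \<times> nat \<Rightarrow> real set)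
    \<Rightarrow> (real \<Rightarrow> (nat \<times> nat) set) \<Rightarrow> bool" where
  "strategy_profile n L I Ip \<sigma> \<longleftrightarrow>
     (\<forall>l\<in>L. \<forall>i\<in>Ip l. \<sigma> i \<in> routes n l) \<and>
     (\<forall>r. {i \<in> I. \<sigma> i = r} \<in> sets lebesgue)"

definition equilibrium ::
  "nat \<Rightarrow> (nat \<times> nat) set \<Rightarrow> real set \<Rightarrow> (nat \<times> nat \<Rightarrow> real set)
    \<Rightarrow> (real \<Rightarrow> nat \<times> nat \<Rightarrow> real \<Rightarrow> real) \<Rightarrow> (real \<Rightarrow> (nat \<times> nat) set) \<Rightarrow> bool" where
  "equilibrium n L I Ip c \<sigma> \<longleftrightarrow> strategy_profile n L I Ip \<sigma> \<and>
     (\<forall>l\<in>L. \<forall>i\<in>Ip l. \<forall>r\<in>routes n l. route_cost c I \<sigma> i (\<sigma> i) \<le> route_cost c I \<sigma> i r)"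

definition A_set :: "nat \<Rightarrow> (nat \<times> nat) set \<Rightarrow> (nat \<times> nat) set \<Rightarrow> (nat \<times> nat) set" where
  "A_set n L J =
     {a \<in> pos_arcs n. {l \<in> L. a \<in> rplus n l} = J} \<union> {a \<in> neg_arcs n. {l \<in> L. a \<in> rminus n l} = J}"

definition f_plus :: "nat \<Rightarrow> (nat \<times> nat \<Rightarrow> real set) \<Rightarrow> (real \<Rightarrow> (nat \<times> nat) set)
    \<Rightarrow> (nat \<times> nat) set \<Rightarrow> real" where
  "f_plus n Ip \<sigma> J = measure lebesgue (\<Union>l\<in>J. {i \<in> Ip l. \<sigma> i = rplus n l})"

definition Delta :: "nat \<Rightarrow> (nat \<times> nat \<Rightarrow> real set) \<Rightarrow> (real \<Rightarrow> (nat \<times> nat) set)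
    \<Rightarrow> (real \<Rightarrow> (nat \<times> nat) set) \<Rightarrow> (nat \<times> nat) set \<Rightarrow> real" where
  "Delta n Ip \<sigma> \<sigma>' J = f_plus n Ip \<sigma> J - f_plus n Ip \<sigma>' J"

definition delta :: "nat \<Rightarrow> (real \<Rightarrow> (nat \<times> nat) set) \<Rightarrow> (real \<Rightarrow> (nat \<times> nat) set)
    \<Rightarrow> nat \<times> nat \<Rightarrow> real \<Rightarrow> real" where
  "delta n \<sigma> \<sigma>' l i = (if \<sigma> i = rplus n l then 1 else 0) - (if \<sigma>' i = rplus n l then 1 else 0)"

end

theory Submission
  imports Defs
begin

text \<open>
  Suppose user i of OD-pair l takes the positive route under \<sigma> and the
  negative one under \<sigma>' (the other case is symmetric: swap \<sigma> and \<sigma>').  On the cycle the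
  load of a positive arc a is exactly f_J^+ for J the set of OD-pairs whose positive route
  contains a; the load of a negative arc is the complementary quantity f_J^-.  Hence
  \<Delta>_J is the change of load on every arc of A_J (with a sign flip on negative arcs).
  If condition (1) fails, then \<Delta>_J \<ge> 0 on all relevant J, so passing from \<sigma>' to \<sigma>
  loads i's positive route no less and unloads its negative route.  Comparing the two
  equilibrium inequalities of user i then forces, by strict monotonicity of i's costs,
  the loads on both routes to coincide, which gives (2).
\<close>

subsection \<open>An exchange argument for strictly increasing costs\<close>

lemma crossing_preferences_force_equal_loads:
  fixes C :: "'a \<Rightarrow> real \<Rightarrow> real" and x y :: "'a \<Rightarrow> real"
  assumes fin: "finite P" "finite M"
    and mono: "\<forall>a\<in>P \<union> M. strict_mono_on {0..} (C a)"
    and nonneg: "\<forall>a. x a \<ge> 0 \<and> y a \<ge> 0"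
    and P_down: "\<forall>a\<in>P. y a \<le> x a" and M_up: "\<forall>a\<in>M. x a \<le> y a"
    and x_prefers_P: "(\<Sum>a\<in>P. C a (x a)) \<le> (\<Sum>a\<in>M. C a (x a))"
    and y_prefers_M: "(\<Sum>a\<in>M. C a (y a)) \<le> (\<Sum>a\<in>P. C a (y a))"
  shows "\<forall>a\<in>P \<union> M. x a = y a"
proof -
  define g where "g a = C a (x a) - C a (y a)" for a
  have g_P: "g a \<ge> 0" if "a \<in> P" for a
    using strict_mono_on_leD[of "{0..}" "C a" "y a" "x a"] mono P_down nonneg that
    unfolding g_def by auto
  have g_M: "- g a \<ge> 0" if "a \<in> M" for a
    using strict_mono_on_leD[of "{0..}" "C a" "x a" "y a"] mono M_up nonneg that
    unfolding g_def by auto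
  have "sum g P + sum (\<lambda>a. - g a) M \<le> 0"
    using x_prefers_P y_prefers_M unfolding g_def sum_subtractf sum_negf by linarith
  moreover have "sum g P \<ge> 0" "sum (\<lambda>a. - g a) M \<ge> 0"
    using g_P g_M by (auto intro: sum_nonneg)
  ultimately have "sum g P = 0" "sum (\<lambda>a. - g a) M = 0" by linarith+
  then have "\<forall>a\<in>P \<union> M. g a = 0"
    using sum_nonneg_eq_0_iff[OF fin(1) g_P] sum_nonneg_eq_0_iff[OF fin(2) g_M] by auto
  then show ?thesis
    using mono nonneg strict_mono_on_eqD[of "{0..}"] unfolding g_def by fastforce
qed

lemma pos_neg_arcs_disjoint:
  assumes "n \<ge> 3" shows "pos_arcs n \<inter> neg_arcs n = {}"
proof (rule ccontr)
  assume "pos_arcs n \<inter> neg_arcs n \<noteq> {}"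
  then obtain k j where kj: "k < n" "j < n" "k = Suc j mod n" "Suc k mod n = j"
    unfolding pos_arcs_def neg_arcs_def by auto
  show False
  proof (cases "Suc k < n")
    case True
    then have "k = Suc (Suc k) mod n" using kj by simp
    then show False using assms True
      by (cases "Suc (Suc k) < n") (auto simp: mod_if split: if_splits)
  next
    case False
    then have "Suc k = n" using kj(1) by arith
    then show False using kj assms by simp
  qed
qed

lemma rplus_subset_pos_arcs: "rplus n l \<subseteq> pos_arcs n"
  unfolding rplus_def pos_arcs_def by auto

lemma rminus_subset_neg_arcs: "rminus n l \<subseteq> neg_arcs n"
  unfolding rminus_def neg_arcs_def by auto

lemma finite_pos_arcs: "finite (pos_arcs n)"
proof -
  have "pos_arcs n = (\<lambda>k. (k, Suc k mod n)) ` {..<n}" unfolding pos_arcs_def by auto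
  then show ?thesis by simp
qed

lemma finite_neg_arcs: "finite (neg_arcs n)"
proof -
  have "neg_arcs n = (\<lambda>k. (Suc k mod n, k)) ` {..<n}" unfolding neg_arcs_def by auto
  then show ?thesis by simp
qed

text \<open>The positive route of a proper OD-pair starts with the arc leaving its origin.\<close>
lemma rplus_nonempty:
  assumes "fst l < n" "snd l < n" "fst l \<noteq> snd l" shows "rplus n l \<noteq> {}"
proof -
  have "(snd l + n - fst l) mod n \<noteq> 0"
  proof (cases "snd l < fst l")
    case False
    then have "snd l + n - fst l = (snd l - fst l) + n" by simp
    moreover have "(snd l - fst l + n) mod n = snd l - fst l" using assms by simp
    ultimately show ?thesis using assms False by simp
  qed (use assms in simp)
  then have "pos_idx n (fst l) (snd l) (fst l)" unfolding pos_idx_def by simp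
  then show ?thesis using assms unfolding rplus_def by auto
qed

lemma rplus_neq_rminus:
  assumes "n \<ge> 3" "fst l < n" "snd l < n" "fst l \<noteq> snd l" shows "rplus n l \<noteq> rminus n l"
  using rplus_nonempty[OF assms(2-4)] rplus_subset_pos_arcs[of n l]
    rminus_subset_neg_arcs[of n l] pos_neg_arcs_disjoint[OF assms(1)] by blast

lemma strategy_profile_route:
  assumes "strategy_profile n L I Ip \<sigma>" "k \<in> L" "j \<in> Ip k"
  shows "\<sigma> j = rplus n k \<or> \<sigma> j = rminus n k"
proof -
  have "\<forall>k\<in>L. \<forall>j\<in>Ip k. \<sigma> j \<in> routes n k"
    using assms(1) unfolding strategy_profile_def by (rule conjunct1)
  then show ?thesis using assms(2,3) unfolding routes_def by blast
qed

lemma equilibrium_imp_strategy_profile: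
  "equilibrium n L I Ip c \<sigma> \<Longrightarrow> strategy_profile n L I Ip \<sigma>"
  unfolding equilibrium_def by (rule conjunct1)

lemma equilibrium_no_better_route:
  assumes "equilibrium n L I Ip c \<sigma>" "k \<in> L" "j \<in> Ip k" "r \<in> routes n k"
  shows "route_cost c I \<sigma> j (\<sigma> j) \<le> route_cost c I \<sigma> j r"
proof -
  have "\<forall>k\<in>L. \<forall>j\<in>Ip k. \<forall>r\<in>routes n k. route_cost c I \<sigma> j (\<sigma> j) \<le> route_cost c I \<sigma> j r"
    using assms(1) unfolding equilibrium_def by (rule conjunct2)
  then show ?thesis using assms(2-4) by blast
qed

subsection \<open>Arc loads in terms of f_J^+ and f_J^-\<close>

text \<open>The OD-pairs whose positive (resp. negative) route contains a given arc; an arc a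
  lies in A_J exactly when J is the corresponding set for a.\<close>
definition pos_demands :: "nat \<Rightarrow> (nat \<times> nat) set \<Rightarrow> nat \<times> nat \<Rightarrow> (nat \<times> nat) set" where
  "pos_demands n L a = {k \<in> L. a \<in> rplus n k}"

definition neg_demands :: "nat \<Rightarrow> (nat \<times> nat) set \<Rightarrow> nat \<times> nat \<Rightarrow> (nat \<times> nat) set" where
  "neg_demands n L a = {k \<in> L. a \<in> rminus n k}"

lemma A_set_cases:
  assumes "a \<in> A_set n L J"
  shows "(a \<in> pos_arcs n \<and> J = pos_demands n L a) \<or> (a \<in> neg_arcs n \<and> J = neg_demands n L a)"
  using assms unfolding A_set_def pos_demands_def neg_demands_def by blast

lemma A_set_pos_demands: "a \<in> pos_arcs n \<Longrightarrow> A_set n L (pos_demands n L a) \<noteq> {}"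
  unfolding A_set_def pos_demands_def by blast

lemma A_set_neg_demands: "a \<in> neg_arcs n \<Longrightarrow> A_set n L (neg_demands n L a) \<noteq> {}"
  unfolding A_set_def neg_demands_def by blast

definition plus_users ::
  "nat \<Rightarrow> (nat \<times> nat \<Rightarrow> real set) \<Rightarrow> (real \<Rightarrow> (nat \<times> nat) set) \<Rightarrow> (nat \<times> nat) set \<Rightarrow> real set" where
  "plus_users n Ip \<sigma> J = (\<Union>k\<in>J. {j \<in> Ip k. \<sigma> j = rplus n k})"

definition minus_users ::
  "nat \<Rightarrow> (nat \<times> nat \<Rightarrow> real set) \<Rightarrow> (real \<Rightarrow> (nat \<times> nat) set) \<Rightarrow> (nat \<times> nat) set \<Rightarrow> real set" where
  "minus_users n Ip \<sigma> J = (\<Union>k\<in>J. {j \<in> Ip k. \<sigma> j = rminus n k})"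

lemma f_plus_eq: "f_plus n Ip \<sigma> J = measure lebesgue (plus_users n Ip \<sigma> J)"
  unfolding f_plus_def plus_users_def ..

text \<open>A user loads a positive arc iff his OD-pair's positive route contains it and he
  takes that route; so the load of a positive arc a is f_J^+ with J = pos_demands a.\<close>
lemma flow_pos_arc:
  assumes n3: "n \<ge> 3" and sp: "strategy_profile n L I Ip \<sigma>"
    and cover: "(\<Union>k\<in>L. Ip k) = I" and a: "a \<in> pos_arcs n"
  shows "flow I \<sigma> a = f_plus n Ip \<sigma> (pos_demands n L a)"
proof -
  have "{j \<in> I. a \<in> \<sigma> j} = plus_users n Ip \<sigma> (pos_demands n L a)"
  proof (intro equalityI subsetI)
    fix j assume j: "j \<in> {j \<in> I. a \<in> \<sigma> j}"
    then obtain k where k: "k \<in> L" "j \<in> Ip k" using cover by auto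
    then have "\<sigma> j = rplus n k \<or> \<sigma> j = rminus n k" by (rule strategy_profile_route[OF sp])
    moreover have "a \<notin> rminus n k"
      using rminus_subset_neg_arcs pos_neg_arcs_disjoint[OF n3] a by blast
    ultimately have "\<sigma> j = rplus n k" using j by auto
    then show "j \<in> plus_users n Ip \<sigma> (pos_demands n L a)"
      using j k unfolding plus_users_def pos_demands_def by blast
  qed (use cover in \<open>auto simp: plus_users_def pos_demands_def\<close>)
  then show ?thesis unfolding flow_def f_plus_eq by simp
qed

lemma flow_neg_arc:
  assumes n3: "n \<ge> 3" and sp: "strategy_profile n L I Ip \<sigma>"
    and cover: "(\<Union>k\<in>L. Ip k) = I" and a: "a \<in> neg_arcs n"
  shows "flow I \<sigma> a = measure lebesgue (minus_users n Ip \<sigma> (neg_demands n L a))"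
proof -
  have "{j \<in> I. a \<in> \<sigma> j} = minus_users n Ip \<sigma> (neg_demands n L a)"
  proof (intro equalityI subsetI)
    fix j assume j: "j \<in> {j \<in> I. a \<in> \<sigma> j}"
    then obtain k where k: "k \<in> L" "j \<in> Ip k" using cover by auto
    then have "\<sigma> j = rplus n k \<or> \<sigma> j = rminus n k" by (rule strategy_profile_route[OF sp])
    moreover have "a \<notin> rplus n k"
      using rplus_subset_pos_arcs pos_neg_arcs_disjoint[OF n3] a by blast
    ultimately have "\<sigma> j = rminus n k" using j by auto
    then show "j \<in> minus_users n Ip \<sigma> (neg_demands n L a)"
      using j k unfolding minus_users_def neg_demands_def by blast
  qed (use cover in \<open>auto simp: minus_users_def neg_demands_def\<close>)
  then show ?thesis unfolding flow_def by simp
qed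

text \<open>f_J^+ + f_J^- is the total mass of the OD-pairs in J, independent of the profile:
  every user takes exactly one of his two (distinct) routes.\<close>
lemma f_plus_plus_f_minus:
  assumes n3: "n \<ge> 3" and sp: "strategy_profile n L I Ip \<sigma>"
    and cover: "(\<Union>k\<in>L. Ip k) = I" and disj: "disjoint_family_on Ip L"
    and Ip_meas: "\<forall>k\<in>L. Ip k \<in> sets lebesgue" and bounded: "bounded I"
    and L_simple: "L \<subseteq> {(s, t). s < n \<and> t < n \<and> s \<noteq> t}" and J: "J \<subseteq> L"
  shows "f_plus n Ip \<sigma> J + measure lebesgue (minus_users n Ip \<sigma> J)
         = measure lebesgue (\<Union>k\<in>J. Ip k)"
proof -
  have "finite L"
    by (rule finite_subset[OF L_simple], rule finite_subset[of _ "{..<n} \<times> {..<n}"]) auto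
  then have finJ: "finite J" using J by (rule finite_subset[rotated])
  have JI: "(\<Union>k\<in>J. Ip k) \<subseteq> I" using J cover by auto
  have lmeas: "(\<Union>k\<in>J. Ip k \<inter> {j \<in> I. \<sigma> j = r k}) \<in> lmeasurable" for r
  proof (rule bounded_set_imp_lmeasurable)
    show "bounded (\<Union>k\<in>J. Ip k \<inter> {j \<in> I. \<sigma> j = r k})"
      using bounded by (rule bounded_subset) auto
    show "(\<Union>k\<in>J. Ip k \<inter> {j \<in> I. \<sigma> j = r k}) \<in> sets lebesgue"
      using finJ J Ip_meas sp unfolding strategy_profile_def by (intro sets.finite_UN) auto
  qed
  have "plus_users n Ip \<sigma> J = (\<Union>k\<in>J. Ip k \<inter> {j \<in> I. \<sigma> j = rplus n k})"
    using JI unfolding plus_users_def by auto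
  then have plus_lmeas: "plus_users n Ip \<sigma> J \<in> lmeasurable" using lmeas by simp
  have "minus_users n Ip \<sigma> J = (\<Union>k\<in>J. Ip k \<inter> {j \<in> I. \<sigma> j = rminus n k})"
    using JI unfolding minus_users_def by auto
  then have minus_lmeas: "minus_users n Ip \<sigma> J \<in> lmeasurable" using lmeas by simp
  have union: "plus_users n Ip \<sigma> J \<union> minus_users n Ip \<sigma> J = (\<Union>k\<in>J. Ip k)"
    using strategy_profile_route[OF sp] J unfolding plus_users_def minus_users_def by blast
  have "plus_users n Ip \<sigma> J \<inter> minus_users n Ip \<sigma> J = {}"
  proof (rule ccontr)
    assume "plus_users n Ip \<sigma> J \<inter> minus_users n Ip \<sigma> J \<noteq> {}"
    then obtain j k k' where kk': "k \<in> J" "k' \<in> J" "j \<in> Ip k" "j \<in> Ip k'"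
      "\<sigma> j = rplus n k" "\<sigma> j = rminus n k'"
      unfolding plus_users_def minus_users_def by blast
    then have "k = k'" using disj J unfolding disjoint_family_on_def by blast
    moreover have "fst k < n" "snd k < n" "fst k \<noteq> snd k" using kk'(1) J L_simple by auto
    ultimately show False using rplus_neq_rminus[OF n3] kk'(5,6) by metis
  qed
  then show ?thesis
    using measure_Un3[OF plus_lmeas minus_lmeas] union unfolding f_plus_eq by simp
qed

lemma Delta_pos_arc:
  assumes "n \<ge> 3" "strategy_profile n L I Ip \<sigma>" "strategy_profile n L I Ip \<sigma>'"
    and "(\<Union>k\<in>L. Ip k) = I" and "a \<in> pos_arcs n"
  shows "flow I \<sigma> a - flow I \<sigma>' a = Delta n Ip \<sigma> \<sigma>' (pos_demands n L a)"
  using flow_pos_arc[OF assms(1,2,4,5)] flow_pos_arc[OF assms(1,3,4,5)]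
  unfolding Delta_def by simp

lemma Delta_neg_arc:
  assumes n3: "n \<ge> 3" and sp: "strategy_profile n L I Ip \<sigma>" "strategy_profile n L I Ip \<sigma>'"
    and cover: "(\<Union>k\<in>L. Ip k) = I" and disj: "disjoint_family_on Ip L"
    and Ip_meas: "\<forall>k\<in>L. Ip k \<in> sets lebesgue" and bounded: "bounded I"
    and L_simple: "L \<subseteq> {(s, t). s < n \<and> t < n \<and> s \<noteq> t}" and a: "a \<in> neg_arcs n"
  shows "flow I \<sigma>' a - flow I \<sigma> a = Delta n Ip \<sigma> \<sigma>' (neg_demands n L a)"
proof -
  have J: "neg_demands n L a \<subseteq> L" unfolding neg_demands_def by blast
  show ?thesis
    using flow_neg_arc[OF n3 sp(1) cover a] flow_neg_arc[OF n3 sp(2) cover a]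
      f_plus_plus_f_minus[OF n3 sp(1) cover disj Ip_meas bounded L_simple J]
      f_plus_plus_f_minus[OF n3 sp(2) cover disj Ip_meas bounded L_simple J]
    unfolding Delta_def by linarith
qed

subsection \<open>The dichotomy\<close>

lemma Delta_nonneg_orders_loads:
  assumes n3: "n \<ge> 3"
    and L_simple: "L \<subseteq> {(s, t). s < n \<and> t < n \<and> s \<noteq> t}"
    and bounded: "bounded I"
    and Ip_meas: "\<forall>k\<in>L. Ip k \<in> sets lebesgue"
    and disj: "disjoint_family_on Ip L"
    and cover: "(\<Union>k\<in>L. Ip k) = I"
    and sp: "strategy_profile n L I Ip \<sigma>" "strategy_profile n L I Ip \<sigma>'"
    and l_in: "l \<in> L"
    and Delta_nonneg: "\<forall>J\<subseteq>L. l \<in> J \<and> A_set n L J \<noteq> {} \<longrightarrow> Delta n Ip \<sigma> \<sigma>' J \<ge> 0"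
  shows "\<forall>a\<in>rplus n l. flow I \<sigma>' a \<le> flow I \<sigma> a"
    and "\<forall>a\<in>rminus n l. flow I \<sigma> a \<le> flow I \<sigma>' a"
proof -
  show "\<forall>a\<in>rplus n l. flow I \<sigma>' a \<le> flow I \<sigma> a"
  proof
    fix a assume a: "a \<in> rplus n l"
    have arc: "a \<in> pos_arcs n" using a rplus_subset_pos_arcs by blast
    have "pos_demands n L a \<subseteq> L" "l \<in> pos_demands n L a"
      using a l_in unfolding pos_demands_def by blast+
    then have "Delta n Ip \<sigma> \<sigma>' (pos_demands n L a) \<ge> 0"
      using Delta_nonneg A_set_pos_demands[OF arc] by simp
    then show "flow I \<sigma>' a \<le> flow I \<sigma> a" using Delta_pos_arc[OF n3 sp cover arc] by linarith
  qed
  show "\<forall>a\<in>rminus n l. flow I \<sigma> a \<le> flow I \<sigma>' a"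
  proof
    fix a assume a: "a \<in> rminus n l"
    have arc: "a \<in> neg_arcs n" using a rminus_subset_neg_arcs by blast
    have "neg_demands n L a \<subseteq> L" "l \<in> neg_demands n L a"
      using a l_in unfolding neg_demands_def by blast+
    then have "Delta n Ip \<sigma> \<sigma>' (neg_demands n L a) \<ge> 0"
      using Delta_nonneg A_set_neg_demands[OF arc] by simp
    then show "flow I \<sigma> a \<le> flow I \<sigma>' a"
      using Delta_neg_arc[OF n3 sp cover disj Ip_meas bounded L_simple arc] by linarith
  qed
qed

text \<open>Main step: if user i switches from his positive route (under \<sigma>) to his negative
  route (under \<sigma>') and \<Delta>_J \<ge> 0 for every relevant J, then the exchange argument
  applied to i's costs shows that no arc of either route changes its load \<dots>\<close>
lemma switching_user_equal_loads:
  assumes n3: "n \<ge> 3"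
    and L_simple: "L \<subseteq> {(s, t). s < n \<and> t < n \<and> s \<noteq> t}"
    and bounded: "bounded I"
    and Ip_meas: "\<forall>k\<in>L. Ip k \<in> sets lebesgue"
    and disj: "disjoint_family_on Ip L"
    and cover: "(\<Union>k\<in>L. Ip k) = I"
    and c_mono: "\<forall>j\<in>I. \<forall>a\<in>pos_arcs n \<union> neg_arcs n. strict_mono_on {0..} (c j a)"
    and eq1: "equilibrium n L I Ip c \<sigma>" and eq2: "equilibrium n L I Ip c \<sigma>'"
    and l_in: "l \<in> L" and i_in: "i \<in> Ip l"
    and switch: "\<sigma> i = rplus n l" "\<sigma>' i = rminus n l"
    and Delta_nonneg: "\<forall>J\<subseteq>L. l \<in> J \<and> A_set n L J \<noteq> {} \<longrightarrow> Delta n Ip \<sigma> \<sigma>' J \<ge> 0"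
  shows "\<forall>a\<in>rplus n l \<union> rminus n l. flow I \<sigma> a = flow I \<sigma>' a"
proof (rule crossing_preferences_force_equal_loads
    [where C = "c i" and x = "flow I \<sigma>" and y = "flow I \<sigma>'"])
  show "finite (rplus n l)" by (rule finite_subset[OF rplus_subset_pos_arcs finite_pos_arcs])
  show "finite (rminus n l)" by (rule finite_subset[OF rminus_subset_neg_arcs finite_neg_arcs])
  have "i \<in> I" using cover l_in i_in by blast
  then show "\<forall>a\<in>rplus n l \<union> rminus n l. strict_mono_on {0..} (c i a)"
    using c_mono rplus_subset_pos_arcs rminus_subset_neg_arcs by blast
  show "\<forall>a. flow I \<sigma> a \<ge> 0 \<and> flow I \<sigma>' a \<ge> 0" unfolding flow_def by simp
  show "\<forall>a\<in>rplus n l. flow I \<sigma>' a \<le> flow I \<sigma> a" "\<forall>a\<in>rminus n l. flow I \<sigma> a \<le> flow I \<sigma>' a"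
    using Delta_nonneg_orders_loads[OF n3 L_simple bounded Ip_meas disj cover
        equilibrium_imp_strategy_profile[OF eq1] equilibrium_imp_strategy_profile[OF eq2]
        l_in Delta_nonneg] by blast+
  have "route_cost c I \<sigma> i (\<sigma> i) \<le> route_cost c I \<sigma> i (rminus n l)"
    using equilibrium_no_better_route[OF eq1 l_in i_in] unfolding routes_def by simp
  then show "(\<Sum>a\<in>rplus n l. c i a (flow I \<sigma> a)) \<le> (\<Sum>a\<in>rminus n l. c i a (flow I \<sigma> a))"
    unfolding route_cost_def switch(1) .
  have "route_cost c I \<sigma>' i (\<sigma>' i) \<le> route_cost c I \<sigma>' i (rplus n l)"
    using equilibrium_no_better_route[OF eq2 l_in i_in] unfolding routes_def by simp
  then show "(\<Sum>a\<in>rminus n l. c i a (flow I \<sigma>' a)) \<le> (\<Sum>a\<in>rplus n l. c i a (flow I \<sigma>' a))"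
    unfolding route_cost_def switch(2) .
qed

text \<open>\<dots> and since every relevant A_J contains an arc of one of i's routes, whose load
  change is \<plusminus>\<Delta>_J, all relevant \<Delta>_J vanish.\<close>
lemma switching_user_forces_Delta_zero:
  assumes n3: "n \<ge> 3"
    and L_simple: "L \<subseteq> {(s, t). s < n \<and> t < n \<and> s \<noteq> t}"
    and bounded: "bounded I"
    and Ip_meas: "\<forall>k\<in>L. Ip k \<in> sets lebesgue"
    and disj: "disjoint_family_on Ip L"
    and cover: "(\<Union>k\<in>L. Ip k) = I"
    and c_mono: "\<forall>j\<in>I. \<forall>a\<in>pos_arcs n \<union> neg_arcs n. strict_mono_on {0..} (c j a)"
    and eq1: "equilibrium n L I Ip c \<sigma>" and eq2: "equilibrium n L I Ip c \<sigma>'"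
    and l_in: "l \<in> L" and i_in: "i \<in> Ip l"
    and switch: "\<sigma> i = rplus n l" "\<sigma>' i = rminus n l"
    and Delta_nonneg: "\<forall>J\<subseteq>L. l \<in> J \<and> A_set n L J \<noteq> {} \<longrightarrow> Delta n Ip \<sigma> \<sigma>' J \<ge> 0"
  shows "\<forall>J\<subseteq>L. l \<in> J \<and> A_set n L J \<noteq> {} \<longrightarrow> Delta n Ip \<sigma> \<sigma>' J = 0"
proof (intro allI impI)
  have sp: "strategy_profile n L I Ip \<sigma>" "strategy_profile n L I Ip \<sigma>'"
    by (rule equilibrium_imp_strategy_profile[OF eq1], rule equilibrium_imp_strategy_profile[OF eq2])
  note equal_loads = switching_user_equal_loads[OF n3 L_simple bounded Ip_meas disj cover
      c_mono eq1 eq2 l_in i_in switch Delta_nonneg]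
  fix J assume J: "J \<subseteq> L" "l \<in> J \<and> A_set n L J \<noteq> {}"
  then obtain a where "a \<in> A_set n L J" by blast
  from A_set_cases[OF this] show "Delta n Ip \<sigma> \<sigma>' J = 0"
  proof
    assume a: "a \<in> pos_arcs n \<and> J = pos_demands n L a"
    then have "a \<in> rplus n l" using J unfolding pos_demands_def by blast
    then have "flow I \<sigma> a = flow I \<sigma>' a" using equal_loads by blast
    then show ?thesis using a Delta_pos_arc[OF n3 sp cover, of a] by simp
  next
    assume a: "a \<in> neg_arcs n \<and> J = neg_demands n L a"
    then have "a \<in> rminus n l" using J unfolding neg_demands_def by blast
    then have "flow I \<sigma> a = flow I \<sigma>' a" using equal_loads by blast
    then show ?thesis
      using a Delta_neg_arc[OF n3 sp cover disj Ip_meas bounded L_simple, of a] by simp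
  qed
qed

lemma delta_nonzero_switch:
  assumes "strategy_profile n L I Ip \<sigma>" "strategy_profile n L I Ip \<sigma>'"
    and "l \<in> L" "i \<in> Ip l" "delta n \<sigma> \<sigma>' l i \<noteq> 0"
  shows "(\<sigma> i = rplus n l \<and> \<sigma>' i = rminus n l \<and> delta n \<sigma> \<sigma>' l i = 1)
       \<or> (\<sigma> i = rminus n l \<and> \<sigma>' i = rplus n l \<and> delta n \<sigma> \<sigma>' l i = -1)"
  using strategy_profile_route[OF assms(1,3,4)] strategy_profile_route[OF assms(2,3,4)] assms(5)
  unfolding delta_def by (auto split: if_splits)

lemma Delta_swap: "Delta n Ip \<sigma>' \<sigma> J = - Delta n Ip \<sigma> \<sigma>' J"
  unfolding Delta_def by simp

theorem lemma1:
  fixes n :: nat and L :: "(nat \<times> nat) set" and I :: "real set"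
    and Ip :: "nat \<times> nat \<Rightarrow> real set"
    and c :: "real \<Rightarrow> nat \<times> nat \<Rightarrow> real \<Rightarrow> real"
    and \<sigma> \<sigma>' :: "real \<Rightarrow> (nat \<times> nat) set"
    and l :: "nat \<times> nat" and i :: real
  assumes n3: "n \<ge> 3"
    and L_simple: "L \<subseteq> {(s, t). s < n \<and> t < n \<and> s \<noteq> t}"
    and I_interval: "is_interval I" and I_bounded: "bounded I"
    and Ip_meas: "\<forall>k\<in>L. Ip k \<in> sets lebesgue"
    and Ip_disj: "disjoint_family_on Ip L"
    and Ip_cover: "(\<Union>k\<in>L. Ip k) = I"
    and c_nonneg: "\<forall>j\<in>I. \<forall>a\<in>pos_arcs n \<union> neg_arcs n. \<forall>x\<ge>0. c j a x \<ge> 0"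
    and c_cont: "\<forall>j\<in>I. \<forall>a\<in>pos_arcs n \<union> neg_arcs n. continuous_on {0..} (c j a)"
    and c_mono: "\<forall>j\<in>I. \<forall>a\<in>pos_arcs n \<union> neg_arcs n. strict_mono_on {0..} (c j a)"
    and c_meas: "\<forall>a\<in>pos_arcs n \<union> neg_arcs n. \<forall>x.
                   (\<lambda>j. c j a x) \<in> borel_measurable (restrict_space lebesgue I)"
    and eq1: "equilibrium n L I Ip c \<sigma>"
    and eq2: "equilibrium n L I Ip c \<sigma>'"
    and l_in: "l \<in> L" and i_in: "i \<in> Ip l"
    and delta_nz: "delta n \<sigma> \<sigma>' l i \<noteq> 0"
  shows "((\<exists>J\<subseteq>L. l \<in> J \<and> A_set n L J \<noteq> {} \<and> delta n \<sigma> \<sigma>' l i * Delta n Ip \<sigma> \<sigma>' J < 0)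
          \<and> \<not> (\<forall>J\<subseteq>L. l \<in> J \<and> A_set n L J \<noteq> {} \<longrightarrow> Delta n Ip \<sigma> \<sigma>' J = 0))
       \<or> (\<not> (\<exists>J\<subseteq>L. l \<in> J \<and> A_set n L J \<noteq> {} \<and> delta n \<sigma> \<sigma>' l i * Delta n Ip \<sigma> \<sigma>' J < 0)
          \<and> (\<forall>J\<subseteq>L. l \<in> J \<and> A_set n L J \<noteq> {} \<longrightarrow> Delta n Ip \<sigma> \<sigma>' J = 0))"
proof -
  let ?P = "\<exists>J\<subseteq>L. l \<in> J \<and> A_set n L J \<noteq> {} \<and> delta n \<sigma> \<sigma>' l i * Delta n Ip \<sigma> \<sigma>' J < 0"
  let ?Q = "\<forall>J\<subseteq>L. l \<in> J \<and> A_set n L J \<noteq> {} \<longrightarrow> Delta n Ip \<sigma> \<sigma>' J = 0"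
  note switch = switching_user_forces_Delta_zero
    [OF n3 L_simple I_bounded Ip_meas Ip_disj Ip_cover c_mono _ _ l_in i_in]
  text \<open>If (1) fails, the sign condition of the main step holds for the profile in
    which i takes his positive route.\<close>
  have Q_unless_P: ?Q if not_P: "\<not> ?P"
    using delta_nonzero_switch[OF equilibrium_imp_strategy_profile[OF eq1]
        equilibrium_imp_strategy_profile[OF eq2] l_in i_in delta_nz]
  proof (elim disjE conjE)
    assume sw: "\<sigma> i = rplus n l" "\<sigma>' i = rminus n l" and "delta n \<sigma> \<sigma>' l i = 1"
    then have "\<forall>J\<subseteq>L. l \<in> J \<and> A_set n L J \<noteq> {} \<longrightarrow> Delta n Ip \<sigma> \<sigma>' J \<ge> 0"
      using not_P by (auto simp: not_less)
    then show ?Q using switch[OF eq1 eq2 sw] by blast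
  next
    assume sw: "\<sigma> i = rminus n l" "\<sigma>' i = rplus n l" and "delta n \<sigma> \<sigma>' l i = -1"
    then have "\<forall>J\<subseteq>L. l \<in> J \<and> A_set n L J \<noteq> {} \<longrightarrow> Delta n Ip \<sigma>' \<sigma> J \<ge> 0"
      using not_P by (auto simp: not_less Delta_swap[of n Ip \<sigma>' \<sigma>])
    then have "\<forall>J\<subseteq>L. l \<in> J \<and> A_set n L J \<noteq> {} \<longrightarrow> Delta n Ip \<sigma>' \<sigma> J = 0"
      using switch[OF eq2 eq1 sw(2,1)] by blast
    then show ?Q by (simp add: Delta_swap[of n Ip \<sigma>' \<sigma>])
  qed
  moreover have "?P \<Longrightarrow> \<not> ?Q" by force
  ultimately show ?thesis by blast
qed

end
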